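(* Let $V$ be a nonempty set, $T:V\to V$, and let $l\ge0$ be an integer with $|T^l(V)|=|T^{l+1}(V)|=m<\infty$. Then $T^{m!+l}=T^l$. If moreover $V$ is a vector space over a field $F$, then $T$ has a vanishing polynomial of degree at most $m^2+l$.
   Context: $T^0$ is the identity and $T^i=T\circ T^{i-1}$. For a vector space $V$ over $F$ and a (not necessarily linear) $T:V\to V$, $p(T)$ for $p(x)=\sum a_ix^i$ is the map $v\mapsto\sum a_iT^i(v)$; a vanishing polynomial of $T$ is a nonzero $p\in F[x]$ with $p(T)(v)=0$ for all $v\in V$. *)

theory Defs
  imports Main "HOL-Computational_Algebra.Polynomial"
begin

definition poly_map :: "('f::field \<Rightarrow> 'v::ab_group_add \<Rightarrow> 'v) \<Rightarrow> 'f poly \<Rightarrow> ('v \<Rightarrow> 'v) \<Rightarrow> 'v \<Rightarrow> 'v" where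
  "poly_map scale p T v = (\<Sum>i\<le>degree p. scale (coeff p i) ((T ^^ i) v))"

definition vanishing_poly :: "('f::field \<Rightarrow> 'v::ab_group_add \<Rightarrow> 'v) \<Rightarrow> ('v \<Rightarrow> 'v) \<Rightarrow> 'f poly \<Rightarrow> bool" where
  "vanishing_poly scale T p \<longleftrightarrow> p \<noteq> 0 \<and> (\<forall>v. poly_map scale p T v = 0)"

end

theory Submission
  imports Defs
begin

text \<open>\<open>T\<close> maps \<open>W = T^l(V)\<close> onto \<open>T^(l+1)(V)\<close>, a subset of \<open>W\<close> of the same finite size \<open>m\<close>,
  so \<open>T\<close> permutes \<open>W\<close>. By pigeonhole each \<open>w\<close> in \<open>W\<close> returns to itself after some
  \<open>c \<le> m\<close> steps, and \<open>c\<close> divides \<open>m!\<close>, whence \<open>T^(m!+l) = T^l\<close>. On a vector space the same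
  periods show that \<open>X^l (X - 1)(X^2 - 1)...(X^m - 1)\<close> vanishes at \<open>T\<close>: at \<open>v\<close>, the factor
  \<open>X^c - 1\<close> for the period \<open>c\<close> of \<open>T^l v\<close> already kills it. Its degree is
  \<open>l + m(m+1)/2 \<le> m^2 + l\<close>.\<close>

lemma bij_betw_periodic_point:
  assumes fin: "finite W" and bij: "bij_betw f W W" and u: "u \<in> W"
  obtains c where "1 \<le> c" "c \<le> card W" "(f ^^ c) u = u"
proof -
  have orbit_in: "(f ^^ n) u \<in> W" for n
    using bij_betwE[OF bij_betw_funpow[OF bij]] u by blast
  have "\<not> inj_on (\<lambda>n. (f ^^ n) u) {0..card W}"
  proof
    assume "inj_on (\<lambda>n. (f ^^ n) u) {0..card W}"
    then have "card ((\<lambda>n. (f ^^ n) u) ` {0..card W}) = card W + 1"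
      by (simp add: card_image)
    moreover have "card ((\<lambda>n. (f ^^ n) u) ` {0..card W}) \<le> card W"
      using orbit_in by (intro card_mono[OF fin]) blast
    ultimately show False by simp
  qed
  then obtain i j where ij: "i < j" "j \<le> card W" "(f ^^ i) u = (f ^^ j) u"
    unfolding inj_on_def by (metis atLeastAtMost_iff linorder_neqE_nat)
  have "(f ^^ i) ((f ^^ (j - i)) u) = (f ^^ (i + (j - i))) u"
    by (simp only: funpow_add comp_apply)
  also have "\<dots> = (f ^^ i) u"
    using ij by simp
  finally have "(f ^^ i) ((f ^^ (j - i)) u) = (f ^^ i) u" .
  then have "(f ^^ (j - i)) u = u"
    using bij_betw_imp_inj_on[OF bij_betw_funpow[OF bij]] orbit_in u
    by (auto dest: inj_onD)
  with ij that[of "j - i"] show ?thesis by simp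
qed

lemma funpow_period_from_stable_image:
  assumes "T ` V \<subseteq> V" "finite ((T ^^ l) ` V)"
    and "card ((T ^^ Suc l) ` V) = card ((T ^^ l) ` V)" and "v \<in> V"
  obtains c where "1 \<le> c" "c \<le> card ((T ^^ l) ` V)" "(T ^^ c) ((T ^^ l) v) = (T ^^ l) v"
proof -
  let ?W = "(T ^^ l) ` V"
  have image_W: "T ` ?W = (T ^^ Suc l) ` V"
    by (simp add: image_image)
  have "T ` ?W \<subseteq> ?W"
    using assms(1) by (auto simp: funpow_swap1 simp del: funpow.simps)
  then have "T ` ?W = ?W"
    using assms(2,3) image_W by (metis card_subset_eq)
  moreover have "inj_on T ?W"
    using assms(2,3) image_W by (simp add: eq_card_imp_inj_on)
  ultimately have "bij_betw T ?W ?W"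
    by (simp add: bij_betw_def)
  then show ?thesis
    by (rule bij_betw_periodic_point[OF assms(2) _ imageI[OF assms(4)]]) (rule that)
qed

lemma funpow_fixed_point: "f x = x \<Longrightarrow> (f ^^ n) x = x"
  by (induction n) auto

lemma funpow_fact_fixed_point:
  assumes "1 \<le> c" "c \<le> m" "(f ^^ c) u = u"
  shows "(f ^^ fact m) u = u"
proof -
  obtain k where k: "fact m = c * k"
    using dvd_fact[OF assms(1,2)] by (auto elim: dvdE)
  have "((f ^^ c) ^^ k) u = u"
    using assms(3) by (rule funpow_fixed_point)
  then show ?thesis
    by (simp only: k funpow_mult)
qed

lemma funpow_fact_plus_eq:
  assumes "T ` V \<subseteq> V" "finite ((T ^^ l) ` V)"
    and "card ((T ^^ Suc l) ` V) = card ((T ^^ l) ` V)" and "v \<in> V"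
  shows "(T ^^ (fact (card ((T ^^ l) ` V)) + l)) v = (T ^^ l) v"
proof -
  obtain c where "1 \<le> c" "c \<le> card ((T ^^ l) ` V)" "(T ^^ c) ((T ^^ l) v) = (T ^^ l) v"
    using funpow_period_from_stable_image[OF assms] .
  then have "(T ^^ fact (card ((T ^^ l) ` V))) ((T ^^ l) v) = (T ^^ l) v"
    by (rule funpow_fact_fixed_point)
  then show ?thesis
    by (simp only: funpow_add comp_apply)
qed

definition period_poly :: "nat \<Rightarrow> nat \<Rightarrow> 'a::comm_ring_1 poly" where
  "period_poly l m = monom 1 l * (\<Prod>c\<in>{1..m}. monom 1 c - 1)"

lemma period_poly_nonzero: "period_poly l m \<noteq> (0 :: 'a::idom poly)"
proof -
  have "monom (1::'a) c - 1 \<noteq> 0" if "1 \<le> c" for c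
  proof
    assume "monom (1::'a) c - 1 = 0"
    then have "coeff (monom (1::'a) c - 1) c = 0" by simp
    with that show False by simp
  qed
  then show ?thesis
    by (auto simp: period_poly_def monom_eq_0_iff)
qed

lemma degree_period_poly_le: "degree (period_poly l m :: 'a::comm_ring_1 poly) \<le> m ^ 2 + l"
proof -
  let ?P = "\<Prod>c\<in>{1..m}. monom (1::'a) c - 1"
  have factor_le: "degree (monom (1::'a) c - 1) \<le> m" if "c \<in> {1..m}" for c
    using that degree_diff_le_max[of "monom (1::'a) c" 1] degree_monom_le[of "1::'a" c] by auto
  have "degree ?P \<le> (\<Sum>c\<in>{1..m}. degree (monom (1::'a) c - 1))"
    using degree_prod_sum_le[of "{1..m}" "\<lambda>c. monom (1::'a) c - 1"] by (simp add: o_def)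
  also have "\<dots> \<le> (\<Sum>c\<in>{1..m}. m)"
    using factor_le by (rule sum_mono)
  finally have "degree ?P \<le> m * m"
    by simp
  have "degree (period_poly l m :: 'a poly) \<le> degree (monom (1::'a) l) + degree ?P"
    unfolding period_poly_def by (rule degree_mult_le)
  also have "\<dots> \<le> l + m * m"
    using degree_monom_le \<open>degree ?P \<le> m * m\<close> by (rule add_mono)
  finally show ?thesis
    by (simp add: power2_eq_square)
qed

context vector_space
begin

lemma poly_map_conv_sum:
  assumes "degree p < N"
  shows "poly_map scale p T v = (\<Sum>i<N. scale (coeff p i) ((T ^^ i) v))"
proof -
  have "poly_map scale p T v = (\<Sum>i<Suc (degree p). scale (coeff p i) ((T ^^ i) v))"
    unfolding poly_map_def by (simp add: lessThan_Suc_atMost)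
  also have "\<dots> = (\<Sum>i<N. scale (coeff p i) ((T ^^ i) v))"
    using assms by (intro sum.mono_neutral_left) (auto simp: coeff_eq_0)
  finally show ?thesis .
qed

lemma poly_map_diff: "poly_map scale (p - q) T v = poly_map scale p T v - poly_map scale q T v"
proof -
  define N where "N = Suc (max (degree p) (degree q))"
  have "degree (p - q) < N" "degree p < N" "degree q < N"
    using degree_diff_le_max[of p q] unfolding N_def by linarith+
  then show ?thesis
    by (simp only: poly_map_conv_sum coeff_diff scale_left_diff_distrib sum_subtractf)
qed

lemma poly_map_pCons_zero: "poly_map scale (pCons 0 p) T v = poly_map scale p T (T v)"
proof -
  have "poly_map scale (pCons 0 p) T v
      = (\<Sum>i<Suc (Suc (degree p)). scale (coeff (pCons 0 p) i) ((T ^^ i) v))"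
    by (rule poly_map_conv_sum) (simp add: degree_pCons_le le_imp_less_Suc)
  also have "\<dots> = (\<Sum>i<Suc (degree p). scale (coeff p i) ((T ^^ i) (T v)))"
    by (subst sum.lessThan_Suc_shift) (simp add: funpow_Suc_right del: funpow.simps)
  also have "\<dots> = poly_map scale p T (T v)"
    by (rule poly_map_conv_sum[symmetric]) simp
  finally show ?thesis .
qed

lemma poly_map_monom_mult: "poly_map scale (monom 1 k * p) T v = poly_map scale p T ((T ^^ k) v)"
  by (induction k arbitrary: v)
    (simp_all add: monom_Suc poly_map_pCons_zero funpow_Suc_right del: funpow.simps)

lemma poly_map_period_poly_eq_0:
  assumes "1 \<le> c" "c \<le> m" "(T ^^ c) ((T ^^ l) v) = (T ^^ l) v"
  shows "poly_map scale (period_poly l m) T v = 0"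
proof -
  define R :: "'a poly" where "R = (\<Prod>d\<in>{1..m} - {c}. monom 1 d - 1)"
  have "(\<Prod>d\<in>{1..m}. monom 1 d - 1) = monom 1 c * R - R"
    using assms(1,2) by (simp add: R_def prod.remove[of _ c] left_diff_distrib)
  then have "poly_map scale (period_poly l m) T v
      = poly_map scale R T ((T ^^ c) ((T ^^ l) v)) - poly_map scale R T ((T ^^ l) v)"
    by (simp add: period_poly_def poly_map_monom_mult poly_map_diff)
  then show ?thesis
    using assms(3) by simp
qed

end

lemma vanishing_poly_period_poly:
  fixes scale :: "'f::field \<Rightarrow> 'v::ab_group_add \<Rightarrow> 'v"
  assumes "vector_space scale" and "finite (range (T ^^ l))"
    and "card (range (T ^^ Suc l)) = card (range (T ^^ l))"
  shows "vanishing_poly scale T (period_poly l (card (range (T ^^ l))))"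
proof -
  have "poly_map scale (period_poly l (card (range (T ^^ l)))) T v = 0" for v
  proof -
    obtain c where "1 \<le> c" "c \<le> card (range (T ^^ l))" "(T ^^ c) ((T ^^ l) v) = (T ^^ l) v"
      using funpow_period_from_stable_image[of T UNIV l v] assms(2,3) by auto
    then show ?thesis
      by (rule vector_space.poly_map_period_poly_eq_0[OF assms(1)])
  qed
  then show ?thesis
    by (simp add: vanishing_poly_def period_poly_nonzero)
qed

theorem mainTheorem15:
  shows "(\<forall>(V::'a set) (T::'a \<Rightarrow> 'a) (l::nat) (m::nat).
            V \<noteq> {} \<and> T ` V \<subseteq> V \<and>
            finite ((T ^^ l) ` V) \<and> finite ((T ^^ Suc l) ` V) \<and>
            card ((T ^^ l) ` V) = m \<and> card ((T ^^ Suc l) ` V) = m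
          \<longrightarrow> (\<forall>v\<in>V. (T ^^ (fact m + l)) v = (T ^^ l) v))
       \<and> (\<forall>(scale::'f::field \<Rightarrow> 'v::ab_group_add \<Rightarrow> 'v) (T::'v \<Rightarrow> 'v) (l::nat) (m::nat).
            vector_space scale \<and>
            finite (range (T ^^ l)) \<and> finite (range (T ^^ Suc l)) \<and>
            card (range (T ^^ l)) = m \<and> card (range (T ^^ Suc l)) = m
          \<longrightarrow> (\<exists>p::'f poly. vanishing_poly scale T p \<and> degree p \<le> m ^ 2 + l))"
proof (intro conjI allI impI ballI; elim conjE)
  show "(T ^^ (fact m + l)) v = (T ^^ l) v"
    if "T ` V \<subseteq> V" "finite ((T ^^ l) ` V)" "card ((T ^^ l) ` V) = m"
      "card ((T ^^ Suc l) ` V) = m" "v \<in> V"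
    for V :: "'a set" and T l m v
    using funpow_fact_plus_eq[of T V l v] that by simp
  show "\<exists>p. vanishing_poly scale T p \<and> degree p \<le> m ^ 2 + l"
    if "vector_space scale" "finite (range (T ^^ l))" "card (range (T ^^ l)) = m"
      "card (range (T ^^ Suc l)) = m"
    for scale :: "'f \<Rightarrow> 'v \<Rightarrow> 'v" and T l m
  proof -
    have "vanishing_poly scale T (period_poly l m)"
      using vanishing_poly_period_poly[OF that(1,2)] that(3,4) by simp
    then show ?thesis
      using degree_period_poly_le by blast
  qed
qed

end
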